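(* For every $\gamma\in[0,1)$, the function $h_\gamma(\mu)=\mu+\frac{\gamma}{1-\gamma}\gamma^{\mu}$ is monotonically increasing in $\mu$ on $(0,\infty)$. *)

theory Defs
  imports Complex_Main
begin

definition h_gamma :: "real \<Rightarrow> real \<Rightarrow> real" where
  "h_gamma \<gamma> \<mu> = \<mu> + \<gamma> / (1 - \<gamma>) * \<gamma> powr \<mu>"

end

theory Submission
  imports Defs
begin

(* For 0 < \<gamma> < 1 the derivative of h_gamma \<gamma> is 1 + \<gamma> ln \<gamma> \<gamma>^\<mu> / (1 - \<gamma>). Since \<gamma> ln \<gamma> \<le> 0
   and \<gamma>^\<mu> \<le> 1 for \<mu> \<ge> 0, the last term is at least \<gamma> ln \<gamma> / (1 - \<gamma>), which is \<ge> -1 by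
   the elementary inequality \<gamma> - 1 \<le> \<gamma> ln \<gamma>, i.e. ln (1/\<gamma>) \<le> 1/\<gamma> - 1. *)

lemma diff_one_le_mult_ln:
  fixes x :: real
  assumes "0 < x"
  shows "x - 1 \<le> x * ln x"
proof -
  have "ln (1 / x) \<le> 1 / x - 1"
    using assms by (intro ln_le_minus_one) simp
  then show ?thesis
    using assms by (simp add: ln_div field_simps)
qed

lemma h_gamma_has_real_derivative:
  fixes \<gamma> \<mu> :: real
  shows "(h_gamma \<gamma> has_real_derivative 1 + \<gamma> / (1 - \<gamma>) * (ln \<gamma> * \<gamma> powr \<mu>)) (at \<mu>)"
proof -
  have "((\<lambda>\<mu>. \<mu> + c * \<gamma> powr \<mu>) has_real_derivative 1 + c * (ln \<gamma> * \<gamma> powr \<mu>)) (at \<mu>)" for c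
    by (auto intro!: derivative_eq_intros)
  then show ?thesis
    unfolding h_gamma_def [abs_def] .
qed

lemma h_gamma_deriv_nonneg:
  fixes \<gamma> \<mu> :: real
  assumes "0 < \<gamma>" and "\<gamma> < 1" and "0 \<le> \<mu>"
  shows "0 \<le> 1 + \<gamma> / (1 - \<gamma>) * (ln \<gamma> * \<gamma> powr \<mu>)"
proof -
  have "\<gamma> powr \<mu> \<le> 1"
    using assms by (intro powr_le1) auto
  moreover have "\<gamma> * ln \<gamma> \<le> 0"
    using assms by (simp add: mult_nonneg_nonpos)
  ultimately have "\<gamma> * ln \<gamma> \<le> \<gamma> * ln \<gamma> * \<gamma> powr \<mu>"
    by (simp add: mult_le_cancel_left1)
  with diff_one_le_mult_ln [OF \<open>0 < \<gamma>\<close>] have "\<gamma> - 1 \<le> \<gamma> * ln \<gamma> * \<gamma> powr \<mu>"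
    by linarith
  with \<open>\<gamma> < 1\<close> show ?thesis
    by (simp add: field_simps)
qed

lemma mono_on_h_gamma:
  fixes \<gamma> :: real
  assumes "0 < \<gamma>" and "\<gamma> < 1"
  shows "mono_on {0..} (h_gamma \<gamma>)"
proof (rule mono_onI)
  fix r s :: real
  assume "r \<in> {0..}" and "r \<le> s"
  show "h_gamma \<gamma> r \<le> h_gamma \<gamma> s"
  proof (rule DERIV_nonneg_imp_nondecreasing [OF \<open>r \<le> s\<close>])
    fix x
    assume "r \<le> x"
    with \<open>r \<in> {0..}\<close> have "0 \<le> x"
      by simp
    with assms show "\<exists>y. (h_gamma \<gamma> has_real_derivative y) (at x) \<and> 0 \<le> y"
      using h_gamma_has_real_derivative h_gamma_deriv_nonneg by blast
  qed
qed

theorem lemma2: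
  fixes \<gamma> :: real
  assumes "0 \<le> \<gamma>" and "\<gamma> < 1"
  shows "mono_on {0<..} (h_gamma \<gamma>)"
proof (cases "\<gamma> = 0")
  case True
  then show ?thesis
    by (simp add: h_gamma_def mono_on_def)
next
  case False
  with assms have "mono_on {0..} (h_gamma \<gamma>)"
    by (intro mono_on_h_gamma) auto
  then show ?thesis
    by (rule mono_on_subset) auto
qed

end
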